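(* Let $E_3$ be the exceptional simple Jordan algebra of $3\times3$ Hermitian matrices over the complex octonions, and let $L(E_3)=U_{-1}\oplus U_0\oplus U_1$ be its associated graded Lie algebra, which is the simple Lie algebra of type $E_7$ with its $3$-grading. Then $L(E_3)$ has no $2$-graded representation $\rho$ with $\rho(U_{-1})\neq 0$.
   Context: $L(A)$ for a Jordan algebra $A$ (product $*$) is $U_{-1}\oplus U_0\oplus U_1$ with $U_{-1}$ the space of $A$, $U_0=\mathrm{span}\{L_a,[L_a,L_b]\}$ ($L_a(x)=a*x$), $U_1=\mathrm{span}\{\bar A, A_a\}$ where $\bar A(x,y)=x*y$, $A_a(x,y)=(x*a)*y+(y*a)*x-a*(x*y)$, with skew bracket $[U_{-1},U_{-1}]=0=[U_1,U_1]$, $[S,a]=S(a)$, $[S_1,S_2]=S_1S_2-S_2S_1$, $[B,a]=(y\mapsto B(a,y))$, $[S,B]=((x,y)\mapsto S(B(x,y))-B(Sx,y)-B(x,Sy))$. A representation $\rho$ of a graded Lie algebra $G=\bigoplus U_i$ on $V$ is $l$-graded if $V=V_1\oplus\dots\oplus V_l$ with all $V_j\neq0$ and $\rho(U_i)V_j\subset V_{i+j}$ ($V_k=0$ for $k\notin\{1,\dots,l\}$). *)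

theory Defs
  imports Complex_Main "HOL-Library.Product_Plus"
begin

text \<open>Level 0 is the field of complex numbers with trivial (identity) involution.
  Level 3 is the algebra of complex octonions (complexified octonions).\<close>

type_synonym c1 = "complex \<times> complex"
type_synonym c2 = "c1 \<times> c1"
type_synonym oct = "c2 \<times> c2"

fun m1 :: "c1 \<Rightarrow> c1 \<Rightarrow> c1" where
  "m1 (a, b) (c, d) = (a * c - d * b, d * a + b * c)"
fun cj1 :: "c1 \<Rightarrow> c1" where "cj1 (a, b) = (a, - b)"
fun s1 :: "complex \<Rightarrow> c1 \<Rightarrow> c1" where "s1 k (a, b) = (k * a, k * b)"

fun m2 :: "c2 \<Rightarrow> c2 \<Rightarrow> c2" where
  "m2 (a, b) (c, d) = (m1 a c - m1 (cj1 d) b, m1 d a + m1 b (cj1 c))"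
fun cj2 :: "c2 \<Rightarrow> c2" where "cj2 (a, b) = (cj1 a, - b)"
fun s2 :: "complex \<Rightarrow> c2 \<Rightarrow> c2" where "s2 k (a, b) = (s1 k a, s1 k b)"

fun om :: "oct \<Rightarrow> oct \<Rightarrow> oct" where
  "om (a, b) (c, d) = (m2 a c - m2 (cj2 d) b, m2 d a + m2 b (cj2 c))"
fun ocj :: "oct \<Rightarrow> oct" where "ocj (a, b) = (cj2 a, - b)"
fun osc :: "complex \<Rightarrow> oct \<Rightarrow> oct" where "osc k (a, b) = (s2 k a, s2 k b)"

definition oemb :: "complex \<Rightarrow> oct" where
  "oemb k = (((k, 0), (0, 0)), ((0, 0), (0, 0)))"
definition ore :: "oct \<Rightarrow> complex" where
  "ore x = fst (fst (fst x))"

type_synonym e3 = "complex \<times> complex \<times> complex \<times> oct \<times> oct \<times> oct"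

fun toMat :: "e3 \<Rightarrow> nat \<Rightarrow> nat \<Rightarrow> oct" where
  "toMat (a1, a2, a3, x1, x2, x3) i j =
     [[oemb a1, x3, ocj x2], [ocj x3, oemb a2, x1], [x2, ocj x1, oemb a3]] ! i ! j"

definition fromMat :: "(nat \<Rightarrow> nat \<Rightarrow> oct) \<Rightarrow> e3" where
  "fromMat M = (ore (M 0 0), ore (M 1 1), ore (M 2 2), M 1 2, M 2 0, M 0 1)"

definition matmul :: "(nat \<Rightarrow> nat \<Rightarrow> oct) \<Rightarrow> (nat \<Rightarrow> nat \<Rightarrow> oct) \<Rightarrow> nat \<Rightarrow> nat \<Rightarrow> oct" where
  "matmul X Y i j = (\<Sum>k<3. om (X i k) (Y k j))"

definition jprod :: "e3 \<Rightarrow> e3 \<Rightarrow> e3" where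
  "jprod x y = fromMat (\<lambda>i j. osc (1/2) (matmul (toMat x) (toMat y) i j + matmul (toMat y) (toMat x) i j))"

fun esc :: "complex \<Rightarrow> e3 \<Rightarrow> e3" where
  "esc k (a1, a2, a3, x1, x2, x3) = (k * a1, k * a2, k * a3, osc k x1, osc k x2, osc k x3)"

inductive_set cspan :: "('b \<Rightarrow> 'b \<Rightarrow> 'b) \<Rightarrow> 'b \<Rightarrow> (complex \<Rightarrow> 'b \<Rightarrow> 'b) \<Rightarrow> 'b set \<Rightarrow> 'b set"
  for ad :: "'b \<Rightarrow> 'b \<Rightarrow> 'b" and z :: 'b and sm :: "complex \<Rightarrow> 'b \<Rightarrow> 'b" and G :: "'b set" where
  cspan_zero: "z \<in> cspan ad z sm G"
| cspan_gen: "g \<in> G \<Longrightarrow> g \<in> cspan ad z sm G"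
| cspan_add: "x \<in> cspan ad z sm G \<Longrightarrow> y \<in> cspan ad z sm G \<Longrightarrow> ad x y \<in> cspan ad z sm G"
| cspan_smul: "x \<in> cspan ad z sm G \<Longrightarrow> sm c x \<in> cspan ad z sm G"

definition Lop :: "('a \<Rightarrow> 'a \<Rightarrow> 'a) \<Rightarrow> 'a \<Rightarrow> 'a \<Rightarrow> 'a" where
  "Lop p a = (\<lambda>x. p a x)"

definition Aop :: "('a::ab_group_add \<Rightarrow> 'a \<Rightarrow> 'a) \<Rightarrow> 'a \<Rightarrow> 'a \<Rightarrow> 'a \<Rightarrow> 'a" where
  "Aop p a = (\<lambda>x y. p (p x a) y + p (p y a) x - p a (p x y))"

definition U0 :: "('a::ab_group_add \<Rightarrow> 'a \<Rightarrow> 'a) \<Rightarrow> (complex \<Rightarrow> 'a \<Rightarrow> 'a) \<Rightarrow> ('a \<Rightarrow> 'a) set" where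
  "U0 p sc = cspan (\<lambda>f g x. f x + g x) (\<lambda>x. 0) (\<lambda>c f x. sc c (f x))
     (range (Lop p) \<union> {(\<lambda>x. Lop p a (Lop p b x) - Lop p b (Lop p a x)) | a b. True})"

definition U1 :: "('a::ab_group_add \<Rightarrow> 'a \<Rightarrow> 'a) \<Rightarrow> (complex \<Rightarrow> 'a \<Rightarrow> 'a) \<Rightarrow> ('a \<Rightarrow> 'a \<Rightarrow> 'a) set" where
  "U1 p sc = cspan (\<lambda>f g x y. f x y + g x y) (\<lambda>x y. 0) (\<lambda>c f x y. sc c (f x y))
     (insert p (range (Aop p)))"

type_synonym 'a lie = "'a \<times> ('a \<Rightarrow> 'a) \<times> ('a \<Rightarrow> 'a \<Rightarrow> 'a)"

text \<open>Elements (a, S, B) with a in U_{-1} = A, S in U_0, B in U_1.\<close>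
definition LA :: "('a::ab_group_add \<Rightarrow> 'a \<Rightarrow> 'a) \<Rightarrow> (complex \<Rightarrow> 'a \<Rightarrow> 'a) \<Rightarrow> 'a lie set" where
  "LA p sc = {(a, S, B). S \<in> U0 p sc \<and> B \<in> U1 p sc}"

definition actSB :: "('a::ab_group_add \<Rightarrow> 'a) \<Rightarrow> ('a \<Rightarrow> 'a \<Rightarrow> 'a) \<Rightarrow> 'a \<Rightarrow> 'a \<Rightarrow> 'a" where
  "actSB S B = (\<lambda>x y. S (B x y) - B (S x) y - B x (S y))"

text \<open>The bracket, extended bilinearly and skew-symmetrically from the homogeneous rules.\<close>
definition brL :: "'a::ab_group_add lie \<Rightarrow> 'a lie \<Rightarrow> 'a lie" where
  "brL g h = (case g of (a1, S1, B1) \<Rightarrow> case h of (a2, S2, B2) \<Rightarrow>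
     (S1 a2 - S2 a1,
      \<lambda>y. S1 (S2 y) - S2 (S1 y) + B1 a2 y - B2 a1 y,
      \<lambda>x y. actSB S1 B2 x y - actSB S2 B1 x y))"

definition addL :: "'a::ab_group_add lie \<Rightarrow> 'a lie \<Rightarrow> 'a lie" where
  "addL g h = (case g of (a1, S1, B1) \<Rightarrow> case h of (a2, S2, B2) \<Rightarrow>
     (a1 + a2, \<lambda>y. S1 y + S2 y, \<lambda>x y. B1 x y + B2 x y))"

definition scL :: "(complex \<Rightarrow> 'a \<Rightarrow> 'a) \<Rightarrow> complex \<Rightarrow> 'a lie \<Rightarrow> 'a lie" where
  "scL sc c g = (case g of (a, S, B) \<Rightarrow> (sc c a, \<lambda>y. sc c (S y), \<lambda>x y. sc c (B x y)))"

definition is_rep :: "('a::ab_group_add \<Rightarrow> 'a \<Rightarrow> 'a) \<Rightarrow> (complex \<Rightarrow> 'a \<Rightarrow> 'a)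
    \<Rightarrow> (complex \<Rightarrow> 'v::ab_group_add \<Rightarrow> 'v) \<Rightarrow> ('a lie \<Rightarrow> 'v \<Rightarrow> 'v) \<Rightarrow> bool" where
  "is_rep p sc smV \<rho> \<longleftrightarrow>
     vector_space smV \<and>
     (\<forall>g\<in>LA p sc. Vector_Spaces.linear smV smV (\<rho> g)) \<and>
     (\<forall>g\<in>LA p sc. \<forall>h\<in>LA p sc. \<rho> (addL g h) = (\<lambda>v. \<rho> g v + \<rho> h v)) \<and>
     (\<forall>g\<in>LA p sc. \<forall>c. \<rho> (scL sc c g) = (\<lambda>v. smV c (\<rho> g v))) \<and>
     (\<forall>g\<in>LA p sc. \<forall>h\<in>LA p sc. \<rho> (brL g h) = (\<lambda>v. \<rho> g (\<rho> h v) - \<rho> h (\<rho> g v)))"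

definition is_2graded :: "('a::ab_group_add \<Rightarrow> 'a \<Rightarrow> 'a) \<Rightarrow> (complex \<Rightarrow> 'a \<Rightarrow> 'a)
    \<Rightarrow> (complex \<Rightarrow> 'v::ab_group_add \<Rightarrow> 'v) \<Rightarrow> ('a lie \<Rightarrow> 'v \<Rightarrow> 'v) \<Rightarrow> bool" where
  "is_2graded p sc smV \<rho> \<longleftrightarrow>
     (\<exists>V1 V2. module.subspace smV V1 \<and> module.subspace smV V2 \<and>
        V1 \<noteq> {0} \<and> V2 \<noteq> {0} \<and> V1 \<inter> V2 = {0} \<and>
        (\<forall>v. \<exists>v1\<in>V1. \<exists>v2\<in>V2. v = v1 + v2) \<and>
        (\<forall>a. (\<forall>v\<in>V1. \<rho> (a, \<lambda>x. 0, \<lambda>x y. 0) v = 0) \<and>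
             (\<forall>v\<in>V2. \<rho> (a, \<lambda>x. 0, \<lambda>x y. 0) v \<in> V1)) \<and>
        (\<forall>S\<in>U0 p sc. (\<forall>v\<in>V1. \<rho> (0, S, \<lambda>x y. 0) v \<in> V1) \<and>
             (\<forall>v\<in>V2. \<rho> (0, S, \<lambda>x y. 0) v \<in> V2)) \<and>
        (\<forall>B\<in>U1 p sc. (\<forall>v\<in>V1. \<rho> (0, \<lambda>x. 0, B) v \<in> V2) \<and>
             (\<forall>v\<in>V2. \<rho> (0, \<lambda>x. 0, B) v = 0)))"

end

theory Submission
  imports Defs
begin

text \<open>
  In a 2-graded representation the operators \<open>T a\<close> by which \<open>a \<in> U\<^sub>-\<^sub>1\<close> acts map \<open>V\<^sub>2\<close>
  into \<open>V\<^sub>1\<close> and kill \<open>V\<^sub>1\<close>, so \<open>T a T b = 0\<close>. Let \<open>Q\<close> be the action of the Jordan product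
  itself, as an element of \<open>U\<^sub>1\<close>. The brackets \<open>[Q, T a] = L\<^sub>a\<close> and \<open>[L\<^sub>a, T b] = T (a * b)\<close>
  give \<open>T (a * b) = - T a Q T b - T b Q T a\<close>, hence \<open>\<sigma> a = -2 Q T a\<close> satisfies
  \<open>\<sigma> a \<sigma> b + \<sigma> b \<sigma> a = 2 \<sigma> (a * b)\<close>: it is a specialization of \<open>E\<^sub>3\<close> in \<open>End V\<close>.
  By Albert's theorem \<open>E\<^sub>3\<close> has no nonzero specialization: in the Peirce decomposition for the
  diagonal idempotents, the corners \<open>\<sigma> e\<^sub>i \<sigma> (x[ij]) \<sigma> e\<^sub>j\<close> compose like products of their
  octonion entries, and composition is associative, whereas \<open>(u\<^sub>1 u\<^sub>2) u\<^sub>4 = - u\<^sub>1 (u\<^sub>2 u\<^sub>4)\<close> for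
  basis units of the octonions. So \<open>Q T a = 0\<close>, and then \<open>T a = T (1 * a) = 0\<close>.
\<close>

section \<open>Specializations of an algebra and their Peirce corners\<close>

text \<open>A Jordan homomorphism into \<open>End V\<close> with the product \<open>(X Y + Y X) / 2\<close>; all products are
  doubled to avoid the factor \<open>1 / 2\<close>.\<close>

locale specialization =
  fixes p :: "'a::ab_group_add \<Rightarrow> 'a \<Rightarrow> 'a" and \<sigma> :: "'a \<Rightarrow> 'v::ab_group_add \<Rightarrow> 'v"
  assumes add_left: "\<sigma> (a + b) v = \<sigma> a v + \<sigma> b v"
    and add_right: "\<sigma> a (u + w) = \<sigma> a u + \<sigma> a w"
    and jordan: "\<sigma> a (\<sigma> b v) + \<sigma> b (\<sigma> a v) = \<sigma> (p a b) v + \<sigma> (p a b) v"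
    and double_eq_zero: "u + u = 0 \<Longrightarrow> u = 0"
begin

lemma zero_right [simp]: "\<sigma> a 0 = 0"
  using add_right[of a 0 0] by simp

lemma zero_left [simp]: "\<sigma> 0 v = 0"
  using add_left[of 0 0 v] by simp

lemma minus_right: "\<sigma> a (- u) = - \<sigma> a u"
  using add_right[of a u "- u"] by (simp add: eq_neg_iff_add_eq_0 add.commute)

lemma minus_left: "\<sigma> (- a) v = - \<sigma> a v"
  using add_left[of a "- a" v] by (simp add: eq_neg_iff_add_eq_0 add.commute)

lemma eq_neg_self: "(u::'v) = - u \<Longrightarrow> u = 0"
  by (rule double_eq_zero) (metis add.right_inverse)

lemma double_cancel: "(u::'v) + u = w + w \<Longrightarrow> u = w"
  using double_eq_zero[of "u - w"] by (simp add: algebra_simps)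

lemma anticommutator: "p a b + p a b = c \<Longrightarrow> \<sigma> a (\<sigma> b v) + \<sigma> b (\<sigma> a v) = \<sigma> c v"
  using jordan[of a b v] add_left[of "p a b" "p a b" v] by simp

lemma square:
  assumes "p a a = c"
  shows "\<sigma> a (\<sigma> a v) = \<sigma> c v"
  by (rule double_cancel) (use jordan[of a a v] assms in simp)

lemma annihilator:
  assumes idem: "p e e = e" and zero: "p e y = 0"
  shows "\<sigma> e (\<sigma> y v) = 0" and "\<sigma> y (\<sigma> e v) = 0"
proof -
  have anti: "\<sigma> e (\<sigma> y u) = - \<sigma> y (\<sigma> e u)" for u
    using jordan[of e y u] zero by (simp add: eq_neg_iff_add_eq_0)
  have idem_\<sigma>: "\<sigma> e (\<sigma> e u) = \<sigma> e u" for u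
    using square[OF idem] .
  have "\<sigma> e (\<sigma> y v) = \<sigma> e (\<sigma> e (\<sigma> y v))" by (simp only: idem_\<sigma>)
  also have "\<dots> = \<sigma> y (\<sigma> e (\<sigma> e v))" by (simp only: anti minus_right minus_minus)
  also have "\<dots> = \<sigma> y (\<sigma> e v)" by (simp only: idem_\<sigma>)
  finally have comm: "\<sigma> e (\<sigma> y v) = \<sigma> y (\<sigma> e v)" .
  have "\<sigma> y (\<sigma> e v) + \<sigma> y (\<sigma> e v) = \<sigma> e (\<sigma> y v) + \<sigma> y (\<sigma> e v)"
    by (simp only: comm)
  also have "\<dots> = 0" by (simp add: anti)
  finally show "\<sigma> y (\<sigma> e v) = 0" by (rule double_eq_zero)
  with comm show "\<sigma> e (\<sigma> y v) = 0" by simp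
qed

definition corner :: "'a \<Rightarrow> 'a \<Rightarrow> 'a \<Rightarrow> 'v \<Rightarrow> 'v" where
  "corner e x f v = \<sigma> e (\<sigma> x (\<sigma> f v))"

lemma peirce_decomposition:
  assumes idem: "p e e = e" and orth: "p e f = 0"
    and half_e: "p e x + p e x = x" and half_f: "p f x + p f x = x"
  shows "\<sigma> x v = corner e x f v + corner f x e v"
proof -
  have "\<sigma> e (\<sigma> x v) = \<sigma> e (\<sigma> f (\<sigma> x v) + \<sigma> x (\<sigma> f v))"
    using anticommutator[OF half_f] by simp
  then have left: "\<sigma> e (\<sigma> x v) = corner e x f v"
    by (simp add: add_right annihilator[OF idem orth] corner_def)
  have right: "\<sigma> x (\<sigma> e v) = corner f x e v"
    using anticommutator[OF half_f, of "\<sigma> e v"] by (simp add: annihilator[OF idem orth] corner_def)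
  show ?thesis
    using anticommutator[OF half_e, of v] by (simp add: left right)
qed

lemma corner_mult:
  assumes idem_e: "p e e = e" and idem_f: "p f f = f"
    and orth_ef: "p e f = 0" and orth_fg: "p f g = 0" and orth_ey: "p e y = 0"
    and half_x: "p f x + p f x = x" and half_y: "p f y + p f y = y"
    and prod: "p x y + p x y = z"
  shows "corner e z g v = corner e x f (corner f y g v)"
proof -
  have y: "\<sigma> y (\<sigma> g v) = \<sigma> f (\<sigma> f (\<sigma> y (\<sigma> g v)))"
    using anticommutator[OF half_y, of "\<sigma> g v"]
    by (simp add: annihilator[OF idem_f orth_fg] square[OF idem_f])
  have x: "\<sigma> e (\<sigma> x w) = \<sigma> e (\<sigma> x (\<sigma> f w))" for w
  proof -
    have "\<sigma> e (\<sigma> x w) = \<sigma> e (\<sigma> f (\<sigma> x w) + \<sigma> x (\<sigma> f w))"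
      using anticommutator[OF half_x] by simp
    then show ?thesis by (simp add: add_right annihilator[OF idem_e orth_ef])
  qed
  have "corner e z g v = \<sigma> e (\<sigma> x (\<sigma> y (\<sigma> g v)) + \<sigma> y (\<sigma> x (\<sigma> g v)))"
    by (simp add: corner_def anticommutator[OF prod])
  also have "\<dots> = \<sigma> e (\<sigma> x (\<sigma> y (\<sigma> g v)))"
    by (simp add: add_right annihilator(1)[OF idem_e orth_ey])
  also have "\<dots> = \<sigma> e (\<sigma> x (\<sigma> f (\<sigma> f (\<sigma> y (\<sigma> g v)))))"
    by (subst y) (rule refl)
  also have "\<dots> = corner e x f (corner f y g v)"
    by (simp only: x[symmetric] corner_def)
  finally show ?thesis .
qed

lemma idempotents_vanish:
  assumes idem_e: "p e e = e" and idem_f: "p f f = f" and orth: "p e f = 0"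
    and half_e: "p e x + p e x = x" and half_f: "p f x + p f x = x"
    and square_x: "p x x = e + f" and corner_zero: "\<And>v. corner e x f v = 0"
  shows "\<sigma> e v = 0" and "\<sigma> f v = 0"
proof -
  have "\<sigma> x w = corner f x e w" for w
    using peirce_decomposition[OF idem_e orth half_e half_f, of w] corner_zero[of w] by simp
  then have x: "\<sigma> x w = \<sigma> f (\<sigma> x (\<sigma> e w))" for w
    unfolding corner_def .
  have "\<sigma> e w + \<sigma> f w = \<sigma> x (\<sigma> x w)" for w
    using square[OF square_x] by (simp add: add_left)
  also have "\<sigma> x (\<sigma> x w) = 0" for w
    by (subst (1 2) x) (simp add: annihilator[OF idem_e orth])
  finally have sum: "\<sigma> e w + \<sigma> f w = 0" for w .
  have "\<sigma> e v = \<sigma> e (\<sigma> e v + \<sigma> f v)"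
    using square[OF idem_e] by (simp add: add_right annihilator[OF idem_e orth])
  then show e: "\<sigma> e v = 0" by (simp add: sum)
  show "\<sigma> f v = 0" using sum[of v] by (simp add: e)
qed

end

section \<open>2-graded representations of \<open>L(A)\<close> give specializations\<close>

lemma vector_space_double_eq_zero:
  fixes u :: "'v::ab_group_add"
  assumes "vector_space (smV :: complex \<Rightarrow> 'v \<Rightarrow> 'v)" and "u + u = 0"
  shows "u = 0"
proof -
  interpret vector_space smV by fact
  have "u = smV (1/2 + 1/2) u" by simp
  also have "\<dots> = smV (1/2) (u + u)" by (simp only: scale_left_distrib scale_right_distrib)
  also have "\<dots> = 0" using assms(2) scale_right_distrib[of "1/2" 0 0] by simp
  finally show ?thesis .
qed

locale two_graded_rep =
  fixes p :: "'a::ab_group_add \<Rightarrow> 'a \<Rightarrow> 'a" and sc :: "complex \<Rightarrow> 'a \<Rightarrow> 'a"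
    and smV :: "complex \<Rightarrow> 'v::ab_group_add \<Rightarrow> 'v" and \<rho> :: "'a lie \<Rightarrow> 'v \<Rightarrow> 'v"
  assumes rep: "is_rep p sc smV \<rho>" and graded: "is_2graded p sc smV \<rho>"
    and p_zero_left: "p 0 b = 0" and p_zero_right: "p a 0 = 0"
begin

abbreviation lower :: "'a \<Rightarrow> 'v \<Rightarrow> 'v" where
  "lower a \<equiv> \<rho> (a, \<lambda>x. 0, \<lambda>x y. 0)"

abbreviation raise :: "'v \<Rightarrow> 'v" where
  "raise \<equiv> \<rho> (0, \<lambda>x. 0, p)"

lemma lower_mem_LA: "(a, \<lambda>x. 0, \<lambda>x y. 0) \<in> LA p sc"
  unfolding LA_def U0_def U1_def by (simp add: cspan.cspan_zero)

lemma raise_mem_LA: "(0, \<lambda>x. 0, p) \<in> LA p sc"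
  unfolding LA_def U0_def U1_def by (simp add: cspan.cspan_zero cspan.cspan_gen)

lemma mult_mem_LA: "(0, p a, \<lambda>x y. 0) \<in> LA p sc"
proof -
  have "p a = Lop p a" by (simp add: Lop_def)
  then show ?thesis
    unfolding LA_def U0_def U1_def by (simp add: cspan.cspan_zero cspan.cspan_gen)
qed

lemma rho_add:
  assumes "g \<in> LA p sc"
  shows "\<rho> g (u + w) = \<rho> g u + \<rho> g w"
proof -
  have "Vector_Spaces.linear smV smV (\<rho> g)" using rep assms unfolding is_rep_def by blast
  then show ?thesis unfolding Vector_Spaces.linear_iff by blast
qed

lemma rho_addL:
  assumes "g \<in> LA p sc" "h \<in> LA p sc"
  shows "\<rho> (addL g h) v = \<rho> g v + \<rho> h v"
proof -
  have "\<rho> (addL g h) = (\<lambda>v. \<rho> g v + \<rho> h v)" using rep assms unfolding is_rep_def by blast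
  then show ?thesis by simp
qed

lemma rho_bracket:
  assumes "g \<in> LA p sc" "h \<in> LA p sc"
  shows "\<rho> (brL g h) v = \<rho> g (\<rho> h v) - \<rho> h (\<rho> g v)"
proof -
  have "\<rho> (brL g h) = (\<lambda>v. \<rho> g (\<rho> h v) - \<rho> h (\<rho> g v))" using rep assms unfolding is_rep_def by blast
  then show ?thesis by simp
qed

lemma rho_zero: "g \<in> LA p sc \<Longrightarrow> \<rho> g 0 = 0"
  using rho_add[of g 0 0] by simp

lemma rho_diff: "g \<in> LA p sc \<Longrightarrow> \<rho> g (u - w) = \<rho> g u - \<rho> g w"
  using rho_add[of g "u - w" w] by (simp add: algebra_simps)

lemma rho_minus: "g \<in> LA p sc \<Longrightarrow> \<rho> g (- u) = - \<rho> g u"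
  using rho_diff[of g 0 u] rho_zero by simp

lemma lower_add_left: "lower (a + b) v = lower a v + lower b v"
proof -
  have "addL (a, \<lambda>x. 0, \<lambda>x y. 0) (b, \<lambda>x. 0, \<lambda>x y. 0) = (a + b, \<lambda>x. 0, \<lambda>x y. 0)"
    by (simp add: addL_def)
  then show ?thesis using rho_addL[OF lower_mem_LA lower_mem_LA] by metis
qed

lemma lower_lower: "lower a (lower b v) = 0"
proof -
  obtain V1 V2 where decomp: "\<forall>v. \<exists>v1\<in>V1. \<exists>v2\<in>V2. v = v1 + v2"
    and grading: "\<forall>a. (\<forall>v\<in>V1. lower a v = 0) \<and> (\<forall>v\<in>V2. lower a v \<in> V1)"
    using graded unfolding is_2graded_def by blast
  obtain v1 v2 where "v1 \<in> V1" "v2 \<in> V2" "v = v1 + v2" using decomp by blast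
  then have "lower b v = lower b v2"
    using grading rho_add[OF lower_mem_LA] by simp
  then show ?thesis using grading \<open>v2 \<in> V2\<close> by simp
qed

lemma lower_mult: "lower (p a b) v = - lower a (raise (lower b v)) - lower b (raise (lower a v))"
proof -
  have mult: "\<rho> (0, p a, \<lambda>x y. 0) w = raise (lower a w) - lower a (raise w)" for w
  proof -
    have "brL (0, \<lambda>x. 0, p) (a, \<lambda>x. 0, \<lambda>x y. 0) = (0, p a, \<lambda>x y. 0)"
      by (simp add: brL_def actSB_def p_zero_left p_zero_right)
    then show ?thesis using rho_bracket[OF raise_mem_LA lower_mem_LA] by metis
  qed
  have "brL (0, p a, \<lambda>x y. 0) (b, \<lambda>x. 0, \<lambda>x y. 0) = (p a b, \<lambda>x. 0, \<lambda>x y. 0)"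
    by (simp add: brL_def actSB_def p_zero_right)
  then have "lower (p a b) v = \<rho> (0, p a, \<lambda>x y. 0) (lower b v) - lower b (\<rho> (0, p a, \<lambda>x y. 0) v)"
    using rho_bracket[OF mult_mem_LA lower_mem_LA] by metis
  also have "\<dots> = - lower a (raise (lower b v)) - lower b (raise (lower a v))"
    by (simp add: mult lower_lower rho_diff[OF lower_mem_LA] rho_zero[OF raise_mem_LA])
  finally show ?thesis .
qed

lemma raise_lower_mult:
  "raise (lower (p a b) v) = - (raise (lower a (raise (lower b v))) + raise (lower b (raise (lower a v))))"
  by (simp add: lower_mult rho_diff[OF raise_mem_LA] rho_minus[OF raise_mem_LA])

lemma specialization_raise_lower:
  "specialization p (\<lambda>a v. - (raise (lower a v) + raise (lower a v)))"
proof
  fix a b :: 'a and u v w :: 'v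
  note lin = rho_add[OF lower_mem_LA] rho_add[OF raise_mem_LA]
    rho_minus[OF lower_mem_LA] rho_minus[OF raise_mem_LA]
  show "- (raise (lower (a + b) v) + raise (lower (a + b) v))
      = - (raise (lower a v) + raise (lower a v)) + - (raise (lower b v) + raise (lower b v))"
    by (simp add: lower_add_left lin algebra_simps)
  show "- (raise (lower a (u + w)) + raise (lower a (u + w)))
      = - (raise (lower a u) + raise (lower a u)) + - (raise (lower a w) + raise (lower a w))"
    by (simp add: lin algebra_simps)
  show "- (raise (lower a (- (raise (lower b v) + raise (lower b v))))
        + raise (lower a (- (raise (lower b v) + raise (lower b v)))))
      + - (raise (lower b (- (raise (lower a v) + raise (lower a v))))
        + raise (lower b (- (raise (lower a v) + raise (lower a v)))))
      = - (raise (lower (p a b) v) + raise (lower (p a b) v))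
      + - (raise (lower (p a b) v) + raise (lower (p a b) v))"
  proof -
    have anti: "raise (lower (p a b) v)
        = - (raise (lower a (raise (lower b v))) + raise (lower b (raise (lower a v))))"
      by (rule raise_lower_mult)
    have neg: "raise (lower c (- (raise (lower d v) + raise (lower d v))))
        = - (raise (lower c (raise (lower d v))) + raise (lower c (raise (lower d v))))" for c d
      by (simp only: lin)
    show ?thesis unfolding anti neg by (simp add: algebra_simps)
  qed
  show "u + u = 0 \<Longrightarrow> u = 0"
    using rep vector_space_double_eq_zero unfolding is_rep_def by blast
qed

end

section \<open>The Peirce frame of \<open>E\<^sub>3\<close>\<close>

lemma oct_cases:
  obtains a b c d e f g h where "(x::oct) = (((a, b), (c, d)), ((e, f), (g, h)))"
  by (metis prod.exhaust)

lemma om_one_left [simp]: "om (oemb 1) x = x"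
  and om_one_right [simp]: "om x (oemb 1) = x"
  and om_zero_left [simp]: "om 0 x = 0"
  and om_zero_right [simp]: "om x 0 = 0"
  and ocj_zero [simp]: "ocj 0 = 0"
  and ocj_ocj [simp]: "ocj (ocj x) = x"
  and ocj_oemb [simp]: "ocj (oemb c) = oemb c"
  and osc_half_double [simp]: "osc (1/2) (x + x) = x"
  by (cases x rule: oct_cases; simp add: oemb_def zero_prod_def)+

lemma s2_half_double [simp]: "s2 (1/2) ((x::c2) + x) = x"
proof -
  obtain a b c d where "x = ((a, b), (c, d))" by (metis prod.exhaust)
  then show ?thesis by simp
qed

lemma osc_zero [simp]: "osc c 0 = 0"
  and oemb_zero [simp]: "oemb 0 = 0"
  and ore_oemb [simp]: "ore (oemb c) = c"
  and ore_zero [simp]: "ore 0 = 0"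
  by (simp_all add: oemb_def ore_def zero_prod_def)

definition oct_basis :: "nat \<Rightarrow> oct" where
  "oct_basis n = (let c = \<lambda>k. of_bool (k = n) in (((c 0, c 1), (c 2, c 3)), ((c 4, c 5), (c 6, c 7))))"

lemma oct_basis_not_associative:
  "om (om (oct_basis 1) (oct_basis 2)) (oct_basis 4) = oct_basis 7"
  "om (oct_basis 1) (om (oct_basis 2) (oct_basis 4)) = - oct_basis 7"
  "om (oct_basis 7) (- oct_basis 7) = oemb 1"
  by (simp_all add: oct_basis_def oemb_def zero_prod_def)

text \<open>Jacobson's \<open>e\<^sub>i\<close> and \<open>x[ij]\<close> (\<open>x\<close> in position \<open>(i, j)\<close>, \<open>ocj x\<close> in \<open>(j, i)\<close>), with indices
  \<open>0, 1, 2\<close> as in \<^const>\<open>toMat\<close>.\<close>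

definition diag_unit :: "nat \<Rightarrow> e3" where
  "diag_unit i = fromMat (\<lambda>k l. if k = i \<and> l = i then oemb 1 else 0)"

definition offdiag :: "nat \<Rightarrow> nat \<Rightarrow> oct \<Rightarrow> e3" where
  "offdiag i j x = fromMat (\<lambda>k l. if k = i \<and> l = j then x else if k = j \<and> l = i then ocj x else 0)"

lemmas E3_product_simps = jprod_def matmul_def fromMat_def numeral_3_eq_3
  diag_unit_def offdiag_def oemb_def ore_def zero_prod_def

lemma less_3_cases: "(i::nat) < 3 \<Longrightarrow> i = 0 \<or> i = 1 \<or> i = 2"
  by auto

lemma index_pair_cases:
  fixes i j :: nat
  assumes "i < 3" "j < 3" "i \<noteq> j"
  obtains "i = 0" "j = 1" | "i = 0" "j = 2" | "i = 1" "j = 0"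
    | "i = 1" "j = 2" | "i = 2" "j = 0" | "i = 2" "j = 1"
  using less_3_cases[OF assms(1)] less_3_cases[OF assms(2)] assms(3) by blast

lemma index_triple_cases:
  fixes i j k :: nat
  assumes "i < 3" "j < 3" "k < 3" "distinct [i, j, k]"
  obtains "i = 0" "j = 1" "k = 2" | "i = 0" "j = 2" "k = 1" | "i = 1" "j = 0" "k = 2"
    | "i = 1" "j = 2" "k = 0" | "i = 2" "j = 0" "k = 1" | "i = 2" "j = 1" "k = 0"
  using less_3_cases[OF assms(1)] less_3_cases[OF assms(2)] less_3_cases[OF assms(3)] assms(4)
  by auto

lemma offdiag_swap: "i \<noteq> j \<Longrightarrow> offdiag j i (ocj x) = offdiag i j x"
  unfolding offdiag_def by (intro arg_cong[where f = fromMat] ext) auto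

lemma offdiag_uminus: "offdiag i j (- x) = - offdiag i j x"
  by (cases x rule: oct_cases) (simp add: offdiag_def fromMat_def ore_def zero_prod_def)

lemma diag_unit_sum: "diag_unit 0 + diag_unit 1 + diag_unit 2 = (1, 1, 1, 0, 0, 0)"
  by (simp add: diag_unit_def fromMat_def)

lemma E3_zero: "(0::e3) = (0, 0, 0, 0, 0, 0)"
  by (simp add: zero_prod_def)

lemma jprod_zero_left: "jprod 0 a = 0"
  and jprod_zero_right: "jprod a 0 = 0"
  by (cases a; simp add: E3_zero jprod_def matmul_def fromMat_def numeral_3_eq_3)+

lemma jprod_unit_left: "jprod (1, 1, 1, 0, 0, 0) a = a"
  by (cases a) (simp add: jprod_def matmul_def fromMat_def numeral_3_eq_3 oemb_def[symmetric]
      split: prod.splits)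

lemma jprod_diag_unit_self: "i < 3 \<Longrightarrow> jprod (diag_unit i) (diag_unit i) = diag_unit i"
  by (auto dest!: less_3_cases simp: E3_product_simps)

lemma jprod_diag_unit_orth:
  "i < 3 \<Longrightarrow> j < 3 \<Longrightarrow> i \<noteq> j \<Longrightarrow> jprod (diag_unit i) (diag_unit j) = 0"
  by (erule (2) index_pair_cases; simp add: E3_product_simps)

lemma jprod_diag_unit_offdiag_left:
  assumes "i < 3" "j < 3" "i \<noteq> j"
  shows "jprod (diag_unit i) (offdiag i j x) + jprod (diag_unit i) (offdiag i j x) = offdiag i j x"
  by (rule index_pair_cases[OF assms]; cases x rule: oct_cases; simp add: E3_product_simps)

lemma jprod_diag_unit_offdiag_right:
  assumes "i < 3" "j < 3" "i \<noteq> j"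
  shows "jprod (diag_unit j) (offdiag i j x) + jprod (diag_unit j) (offdiag i j x) = offdiag i j x"
  using jprod_diag_unit_offdiag_left[of j i "ocj x"] assms by (simp add: offdiag_swap)

lemma jprod_diag_unit_offdiag_disjoint:
  assumes "i < 3" "j < 3" "k < 3" "distinct [i, j, k]"
  shows "jprod (diag_unit k) (offdiag i j x) = 0"
  by (rule index_triple_cases[OF assms]; cases x rule: oct_cases; simp add: E3_product_simps)

lemma jprod_offdiag_offdiag:
  assumes "i < 3" "j < 3" "k < 3" "distinct [i, j, k]"
  shows "jprod (offdiag i j x) (offdiag j k y) + jprod (offdiag i j x) (offdiag j k y)
    = offdiag i k (om x y)"
  by (rule index_triple_cases[OF assms]; cases x rule: oct_cases; cases y rule: oct_cases;
      simp add: E3_product_simps)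

lemma jprod_offdiag_one_self:
  assumes "i < 3" "j < 3" "i \<noteq> j"
  shows "jprod (offdiag i j (oemb 1)) (offdiag i j (oemb 1)) = diag_unit i + diag_unit j"
  by (rule index_pair_cases[OF assms]; simp add: E3_product_simps)

section \<open>\<open>E\<^sub>3\<close> has no nonzero specialization\<close>

locale E3_specialization = specialization jprod \<sigma> for \<sigma> :: "e3 \<Rightarrow> 'v::ab_group_add \<Rightarrow> 'v"
begin

abbreviation block :: "nat \<Rightarrow> nat \<Rightarrow> oct \<Rightarrow> 'v \<Rightarrow> 'v" where
  "block i j x \<equiv> corner (diag_unit i) (offdiag i j x) (diag_unit j)"

lemma block_mult:
  assumes "i < 3" "j < 3" "k < 3" "distinct [i, j, k]"
  shows "block i k (om x y) v = block i j x (block j k y v)"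
  using assms
  by (intro corner_mult) (simp_all add: jprod_diag_unit_self jprod_diag_unit_orth
      jprod_diag_unit_offdiag_left jprod_diag_unit_offdiag_right jprod_diag_unit_offdiag_disjoint
      jprod_offdiag_offdiag)

lemma block_minus: "block i j (- x) v = - block i j x v"
  by (simp add: corner_def offdiag_uminus minus_left minus_right)

lemma block_assoc: "block 0 1 (om (om x y) z) v = block 0 1 (om x (om y z)) v"
proof -
  \<comment> \<open>Inserting the unit octonion in the corners \<open>(1, 0)\<close> and \<open>(2, 1)\<close> lets the corner
    product reassociate.\<close>
  have m012: "block 0 2 (om a b) w = block 0 1 a (block 1 2 b w)" for a b w
    by (rule block_mult) auto
  have m021: "block 0 1 (om a b) w = block 0 2 a (block 2 1 b w)" for a b w
    by (rule block_mult) auto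
  have u102: "block 1 2 b w = block 1 0 (oemb 1) (block 0 2 b w)" for b w
    using block_mult[of 1 0 2 "oemb 1" b w] by simp
  have u021: "block 0 1 a w = block 0 2 a (block 2 1 (oemb 1) w)" for a w
    using block_mult[of 0 2 1 a "oemb 1" w] by simp
  have "block 0 1 (om (om x y) z) v = block 0 1 x (block 1 2 y (block 2 1 z v))"
    by (simp only: m021 m012)
  also have "\<dots> = block 0 1 x (block 1 0 (oemb 1) (block 0 1 (om y z) v))"
    by (simp only: u102 m021)
  also have "\<dots> = block 0 1 x (block 1 2 (om y z) (block 2 1 (oemb 1) v))"
    by (simp only: u021 u102)
  also have "\<dots> = block 0 1 (om x (om y z)) v"
    by (simp only: m012 u021)
  finally show ?thesis .
qed

lemma block_02_one: "block 0 2 (oemb 1) v = 0"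
proof -
  let ?e = oct_basis
  have neg: "block 0 1 (?e 7) w = - block 0 1 (?e 7) w" for w
    using block_assoc[of "?e 1" "?e 2" "?e 4" w]
    by (simp only: oct_basis_not_associative block_minus)
  have "block 0 1 (?e 7) w = 0" for w
    using neg by (rule eq_neg_self)
  moreover have "block 0 2 (oemb 1) v = block 0 1 (?e 7) (block 1 2 (- ?e 7) v)"
    using block_mult[of 0 1 2 "?e 7" "- ?e 7" v] by (simp add: oct_basis_not_associative)
  ultimately show ?thesis by simp
qed

lemma diag_unit_vanish: "\<sigma> (diag_unit 0) v = 0" "\<sigma> (diag_unit 1) v = 0" "\<sigma> (diag_unit 2) v = 0"
proof -
  note peirce = jprod_diag_unit_self jprod_diag_unit_orth jprod_diag_unit_offdiag_left
    jprod_diag_unit_offdiag_right jprod_offdiag_one_self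
  have e0: "\<sigma> (diag_unit 0) w = 0" and e2: "\<sigma> (diag_unit 2) w = 0" for w
    using idempotents_vanish[where e = "diag_unit 0" and f = "diag_unit 2" and x = "offdiag 0 2 (oemb 1)"]
    by (simp_all add: peirce block_02_one)
  show "\<sigma> (diag_unit 0) v = 0" "\<sigma> (diag_unit 2) v = 0" by (fact e0 e2)+
  show "\<sigma> (diag_unit 1) v = 0"
    using idempotents_vanish[where e = "diag_unit 0" and f = "diag_unit 1" and x = "offdiag 0 1 (oemb 1)"]
    by (simp add: peirce corner_def e0)
qed

theorem vanish: "\<sigma> a v = 0"
proof -
  have unit: "\<sigma> (1, 1, 1, 0, 0, 0) w = 0" for w
    unfolding diag_unit_sum[symmetric] add_left diag_unit_vanish by simp
  have "\<sigma> (1, 1, 1, 0, 0, 0) (\<sigma> a v) + \<sigma> a (\<sigma> (1, 1, 1, 0, 0, 0) v) = \<sigma> (a + a) v"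
    by (rule anticommutator) (simp only: jprod_unit_left)
  then have "\<sigma> a v + \<sigma> a v = 0"
    by (simp only: unit zero_right add_0 add_left)
  then show ?thesis by (rule double_eq_zero)
qed
end

theorem mainTheorem6:
  fixes smV :: "complex \<Rightarrow> 'v::ab_group_add \<Rightarrow> 'v"
    and \<rho> :: "e3 lie \<Rightarrow> 'v \<Rightarrow> 'v"
  assumes "is_rep jprod esc smV \<rho>"
    and "is_2graded jprod esc smV \<rho>"
  shows "\<forall>a. \<rho> (a, \<lambda>x. 0, \<lambda>x y. 0) = (\<lambda>v. 0)"
proof -
  interpret two_graded_rep jprod esc smV \<rho>
    using assms jprod_zero_left jprod_zero_right by unfold_locales
  interpret E3_specialization "\<lambda>a v. - (raise (lower a v) + raise (lower a v))"
    unfolding E3_specialization_def by (rule specialization_raise_lower)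
  have raise_lower: "raise (lower a v) = 0" for a v
  proof (rule double_eq_zero)
    show "raise (lower a v) + raise (lower a v) = 0"
      using vanish[of a v] by (simp only: neg_equal_0_iff_equal)
  qed
  show ?thesis
  proof (intro allI ext)
    fix a v
    have "lower a v = lower (jprod (1, 1, 1, 0, 0, 0) a) v"
      by (simp add: jprod_unit_left)
    also have "\<dots> = 0"
      by (simp add: lower_mult raise_lower rho_zero[OF lower_mem_LA])
    finally show "\<rho> (a, \<lambda>x. 0, \<lambda>x y. 0) v = 0" .
  qed
qed

end
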